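(* Let $\tilde f$ be analytic on $[-1,1]$, $N\ge0$, and $F^{(N)}=[f_{k,\ell}]$ the $(N+1)$-banded truncated coefficient matrix. For $M\ge1$ let $F^{(N)}_M$ be its $M\times M$ leading principal submatrix. Assume there exist $r<1$ and $M_0$ such that $W(F^{(N)}_M)\subseteq\{z\in\mathbb{C}:|z|\le r\}$ for all $M>M_0$. Then the bounded operator on $\ell^2(\mathbb{N}_0)$ with matrix $I-F^{(N)}$ (with respect to the standard orthonormal basis $e_0,e_1,\dots$) is invertible. Moreover, if $y$ lies in its range and $x$ solves $(I-F^{(N)})x=y$, then the solutions $x_M\in\mathbb{C}^M$ of $(I_M-F^{(N)}_M)x_M=P_My$ (extended by zeros) converge to $x$ in $\ell^2$-norm as $M\to\infty$.
   Context: Let $\{p_k\}_{k\ge0}$ be the orthonormal Legendre polynomials on $[-1,1]$ and $\Theta$ the Heaviside function ($\Theta(x)=0$ for $x<0$, $1$ for $x\ge0$). Write $\tilde f=\sum_{d\ge0}\alpha_dp_d$ with $\alpha_d=\int_{-1}^1\tilde fp_d$. The Legendre basis matrix $B^{(d)}=[b^{(d)}_{k,\ell}]_{k,\ell\ge0}$ has entries $b^{(d)}_{k,\ell}=\int_{-1}^1\int_{-1}^1p_d(\tau)\Theta(\tau-\rho)p_k(\tau)p_\ell(\rho)\,d\rho\,d\tau$, and $F^{(N)}:=\sum_{d=0}^N\alpha_dB^{(d)}$. $P_M$ denotes the orthogonal projection of $\ell^2$ onto the span of $e_0,\dots,e_{M-1}$, identified with $\mathbb{C}^M$. The field of values of a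 square matrix $A$ is $W(A)=\{v^HAv:\|v\|_2=1\}$. *)

theory Defs
  imports "HOL-Analysis.Analysis"
begin

text \<open>Orthonormal Legendre polynomials on [-1,1]:
  p_k = sqrt((2k+1)/2) * P_k, with the classical Legendre polynomial
  P_k(t) = sum_{j=0}^k (k choose j) ((k+j) choose j) ((t-1)/2)^j.\<close>
definition legendre_on :: "nat \<Rightarrow> real \<Rightarrow> real" where
  "legendre_on k t = sqrt ((2 * real k + 1) / 2) *
     (\<Sum>j\<le>k. real (k choose j) * real ((k + j) choose j) * ((t - 1) / 2) ^ j)"

definition heaviside :: "real \<Rightarrow> real" where
  "heaviside x = (if x < 0 then 0 else 1)"

definition leg_coeff :: "(real \<Rightarrow> complex) \<Rightarrow> nat \<Rightarrow> complex" where
  "leg_coeff f d = integral {-1..1} (\<lambda>t. f t * complex_of_real (legendre_on d t))"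

definition basis_entry :: "nat \<Rightarrow> nat \<Rightarrow> nat \<Rightarrow> real" where
  "basis_entry d k l = integral {-1..1} (\<lambda>\<tau>. integral {-1..1} (\<lambda>\<rho>.
      legendre_on d \<tau> * heaviside (\<tau> - \<rho>) * legendre_on k \<tau> * legendre_on l \<rho>))"

definition coeff_matrix :: "(real \<Rightarrow> complex) \<Rightarrow> nat \<Rightarrow> nat \<Rightarrow> nat \<Rightarrow> complex" where
  "coeff_matrix f N k l = (\<Sum>d\<le>N. leg_coeff f d * complex_of_real (basis_entry d k l))"

definition field_of_values :: "nat \<Rightarrow> (nat \<Rightarrow> nat \<Rightarrow> complex) \<Rightarrow> complex set" where
  "field_of_values M A = {(\<Sum>k<M. \<Sum>l<M. cnj (v k) * A k l * v l) | v :: nat \<Rightarrow> complex.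
       (\<Sum>k<M. (cmod (v k))\<^sup>2) = 1}"

definition l2 :: "(nat \<Rightarrow> complex) set" where
  "l2 = {x. summable (\<lambda>n. (cmod (x n))\<^sup>2)}"

definition l2norm :: "(nat \<Rightarrow> complex) \<Rightarrow> real" where
  "l2norm x = sqrt (\<Sum>n. (cmod (x n))\<^sup>2)"

definition id_minus_mat :: "(nat \<Rightarrow> nat \<Rightarrow> complex) \<Rightarrow> (nat \<Rightarrow> complex) \<Rightarrow> nat \<Rightarrow> complex" where
  "id_minus_mat A x k = x k - (\<Sum>l. A k l * x l)"

end

theory Submission
  imports Defs
begin

text \<open>For \<open>M > M0\<close> the bound \<open>|\<langle>v, A\<^sub>M v\<rangle>| \<le> r \<parallel>v\<parallel>\<^sup>2\<close> polarizes to
  \<open>|\<langle>u, A\<^sub>M w\<rangle>| \<le> r (\<parallel>u\<parallel>\<^sup>2 + \<parallel>w\<parallel>\<^sup>2)\<close>, so \<open>\<parallel>A\<^sub>M\<parallel> \<le> sqrt (r / (1 - r))\<close>, and it makes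
  \<open>I - A\<^sub>M\<close> coercive: \<open>Re \<langle>v, (I - A\<^sub>M) v\<rangle> \<ge> (1 - r) \<parallel>v\<parallel>\<^sup>2\<close>. Together these make
  \<open>v \<mapsto> v - t (I - A\<^sub>M) v\<close> a contraction for a suitable \<open>t > 0\<close>, uniformly in \<open>M\<close>, which
  gives the stability bound \<open>\<parallel>v\<parallel> \<le> C \<parallel>(I - A\<^sub>M) v\<parallel>\<close>. Finitely supported vectors are
  dense in \<open>\<ell>\<^sup>2\<close>, so the contraction and stability carry over to the infinite matrix, and the
  Banach fixed point theorem for \<open>x \<mapsto> x - t ((I - A) x - y)\<close> gives surjectivity. Finally the
  stability bound applied to \<open>x\<^sub>M - P\<^sub>M x\<close> gives \<open>\<parallel>x\<^sub>M - x\<parallel> \<le> C \<parallel>(I - P\<^sub>M) x\<parallel> \<rightarrow> 0\<close>.\<close>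

section \<open>Finite sections of sequences and the space \<open>\<ell>\<^sup>2\<close>\<close>

definition section_norm :: "nat \<Rightarrow> (nat \<Rightarrow> complex) \<Rightarrow> real" where
  "section_norm M u = L2_set (\<lambda>k. cmod (u k)) {..<M}"

lemma section_norm_nonneg [simp]: "0 \<le> section_norm M u"
  by (simp add: section_norm_def)

lemma section_norm_sq: "(section_norm M u)\<^sup>2 = (\<Sum>k<M. (cmod (u k))\<^sup>2)"
  by (simp add: section_norm_def L2_set_def sum_nonneg)

lemma section_norm_zero [simp]: "section_norm M (\<lambda>k. 0) = 0"
  by (simp add: section_norm_def L2_set_def)

lemma section_norm_cong: "(\<And>k. k < M \<Longrightarrow> u k = v k) \<Longrightarrow> section_norm M u = section_norm M v"
  unfolding section_norm_def by (rule L2_set_cong) auto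

lemma section_norm_add_le: "section_norm M (\<lambda>k. u k + v k) \<le> section_norm M u + section_norm M v"
proof -
  have "section_norm M (\<lambda>k. u k + v k) \<le> L2_set (\<lambda>k. cmod (u k) + cmod (v k)) {..<M}"
    unfolding section_norm_def by (rule L2_set_mono) (auto simp: norm_triangle_ineq)
  also have "\<dots> \<le> section_norm M u + section_norm M v"
    unfolding section_norm_def by (rule L2_set_triangle_ineq)
  finally show ?thesis .
qed

lemma section_norm_diff_le: "section_norm M (\<lambda>k. u k - v k) \<le> section_norm M u + section_norm M v"
  using section_norm_add_le[of M u "\<lambda>k. - v k"]
  by (simp add: section_norm_def)

lemma section_norm_scale: "section_norm M (\<lambda>k. c * u k) = cmod c * section_norm M u"
  unfolding section_norm_def by (simp add: L2_set_right_distrib norm_mult)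

lemma section_norm_mono: "M \<le> M' \<Longrightarrow> section_norm M u \<le> section_norm M' u"
  unfolding section_norm_def L2_set_def by (intro real_sqrt_le_mono sum_mono2) auto

lemma section_norm_supported:
  assumes "\<And>k. L \<le> k \<Longrightarrow> u k = 0" and "L \<le> M"
  shows "section_norm M u = section_norm L u"
  unfolding section_norm_def L2_set_def
  using assms by (intro arg_cong[where f=sqrt] sum.mono_neutral_right) auto

lemma norm_le_section_norm: "k < M \<Longrightarrow> cmod (u k) \<le> section_norm M u"
  unfolding section_norm_def by (rule member_le_L2_set) auto

lemma section_norm_le_0_imp_zero: "section_norm M u \<le> 0 \<Longrightarrow> k < M \<Longrightarrow> u k = 0"
  using norm_le_section_norm[of k M u] by (metis norm_le_zero_iff order_trans)

lemma section_norm_tendsto: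
  "(\<And>k. (\<lambda>m. X m k) \<longlonglongrightarrow> x k) \<Longrightarrow> (\<lambda>m. section_norm M (X m)) \<longlonglongrightarrow> section_norm M x"
  unfolding section_norm_def L2_set_def
  by (intro tendsto_real_sqrt tendsto_sum tendsto_power tendsto_norm)

lemma section_norm_le_l2norm: "x \<in> l2 \<Longrightarrow> section_norm M x \<le> l2norm x"
  unfolding section_norm_def L2_set_def l2norm_def l2_def
  by (intro real_sqrt_le_mono sum_le_suminf) auto

lemma l2I_section_norm_bound:
  assumes bound: "\<And>M. N \<le> M \<Longrightarrow> section_norm M x \<le> C"
  shows "x \<in> l2" and "l2norm x \<le> C"
proof -
  have le_C: "section_norm M x \<le> C" for M
    using section_norm_mono[of M "max M N" x] bound[of "max M N"] by simp
  then have C: "0 \<le> C"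
    using section_norm_nonneg order_trans by blast
  have sq: "(\<Sum>k<M. (cmod (x k))\<^sup>2) \<le> C\<^sup>2" for M
    using power_mono[OF le_C section_norm_nonneg, of M 2] by (simp add: section_norm_sq)
  have summable: "summable (\<lambda>k. (cmod (x k))\<^sup>2)"
    by (rule summableI_nonneg_bounded[OF _ sq]) simp
  then show "x \<in> l2" by (simp add: l2_def)
  have "(\<Sum>k. (cmod (x k))\<^sup>2) \<le> C\<^sup>2" by (rule suminf_le_const[OF summable sq])
  then show "l2norm x \<le> C"
    unfolding l2norm_def using C real_sqrt_le_mono by fastforce
qed

lemma l2norm_nonneg [simp]: "x \<in> l2 \<Longrightarrow> 0 \<le> l2norm x"
  by (simp add: l2norm_def l2_def suminf_nonneg)

lemma norm_le_l2norm: "x \<in> l2 \<Longrightarrow> cmod (x k) \<le> l2norm x"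
  using norm_le_section_norm[of k "Suc k" x] section_norm_le_l2norm[of x "Suc k"] by simp

lemma l2norm_le_0_imp_zero: "x \<in> l2 \<Longrightarrow> l2norm x \<le> 0 \<Longrightarrow> x k = 0"
  using norm_le_l2norm[of x k] by (metis norm_le_zero_iff order_trans)

lemma l2_add:
  assumes "x \<in> l2" "y \<in> l2"
  shows "(\<lambda>k. x k + y k) \<in> l2" and "l2norm (\<lambda>k. x k + y k) \<le> l2norm x + l2norm y"
proof -
  have "section_norm M (\<lambda>k. x k + y k) \<le> l2norm x + l2norm y" for M
    using section_norm_add_le[of M x y] section_norm_le_l2norm[OF assms(1), of M]
      section_norm_le_l2norm[OF assms(2), of M] by linarith
  then show "(\<lambda>k. x k + y k) \<in> l2" and "l2norm (\<lambda>k. x k + y k) \<le> l2norm x + l2norm y"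
    using l2I_section_norm_bound[of 0] by blast+
qed

lemma l2_diff:
  assumes "x \<in> l2" "y \<in> l2"
  shows "(\<lambda>k. x k - y k) \<in> l2" and "l2norm (\<lambda>k. x k - y k) \<le> l2norm x + l2norm y"
proof -
  have "section_norm M (\<lambda>k. x k - y k) \<le> l2norm x + l2norm y" for M
    using section_norm_diff_le[of M x y] section_norm_le_l2norm[OF assms(1), of M]
      section_norm_le_l2norm[OF assms(2), of M] by linarith
  then show "(\<lambda>k. x k - y k) \<in> l2" and "l2norm (\<lambda>k. x k - y k) \<le> l2norm x + l2norm y"
    using l2I_section_norm_bound[of 0] by blast+
qed

lemma l2_scale:
  assumes "x \<in> l2"
  shows "(\<lambda>k. c * x k) \<in> l2" and "l2norm (\<lambda>k. c * x k) \<le> cmod c * l2norm x"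
proof -
  have "section_norm M (\<lambda>k. c * x k) \<le> cmod c * l2norm x" for M
    using section_norm_le_l2norm[OF assms, of M] by (simp add: section_norm_scale mult_left_mono)
  then show "(\<lambda>k. c * x k) \<in> l2" and "l2norm (\<lambda>k. c * x k) \<le> cmod c * l2norm x"
    using l2I_section_norm_bound[of 0] by blast+
qed

lemma l2_supported:
  assumes "\<And>k. M \<le> k \<Longrightarrow> x k = 0"
  shows "x \<in> l2" and "l2norm x = section_norm M x"
proof -
  have bound: "section_norm n x \<le> section_norm M x" if "M \<le> n" for n
    using section_norm_supported[OF assms that] by simp
  show x: "x \<in> l2" by (rule l2I_section_norm_bound(1)[of M, OF bound])
  show "l2norm x = section_norm M x"
    using l2I_section_norm_bound(2)[of M, OF bound] section_norm_le_l2norm[OF x, of M] by linarith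
qed

lemma l2norm_minus_commute: "l2norm (\<lambda>k. x k - y k) = l2norm (\<lambda>k. y k - x k)"
  by (simp add: l2norm_def norm_minus_commute)

lemma zero_in_l2: "(\<lambda>k. 0) \<in> l2"
  by (simp add: l2_def)

lemma l2norm_zero [simp]: "l2norm (\<lambda>k. 0) = 0"
  by (simp add: l2norm_def)

definition proj_section :: "nat \<Rightarrow> (nat \<Rightarrow> complex) \<Rightarrow> nat \<Rightarrow> complex" where
  "proj_section M x k = (if k < M then x k else 0)"

definition proj_tail :: "nat \<Rightarrow> (nat \<Rightarrow> complex) \<Rightarrow> nat \<Rightarrow> complex" where
  "proj_tail M x k = (if k < M then 0 else x k)"

lemma proj_section_l2: "proj_section M x \<in> l2"
  by (rule l2_supported[of M]) (simp add: proj_section_def)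

lemma l2norm_proj_section_le: "x \<in> l2 \<Longrightarrow> l2norm (proj_section M x) \<le> l2norm x"
  using l2_supported(2)[of M "proj_section M x"] section_norm_le_l2norm[of x M]
    section_norm_cong[of M "proj_section M x" x]
  by (simp add: proj_section_def)

lemma proj_section_eq_diff_tail: "proj_section M x = (\<lambda>k. x k - proj_tail M x k)"
  by (auto simp: proj_section_def proj_tail_def)

lemma proj_tail_l2:
  assumes "x \<in> l2"
  shows "proj_tail M x \<in> l2" and "(\<lambda>M. l2norm (proj_tail M x)) \<longlonglongrightarrow> 0"
proof -
  let ?g = "\<lambda>k. (cmod (x k))\<^sup>2"
  have summable: "summable ?g" using assms by (simp add: l2_def)
  have tail_summable: "summable (\<lambda>k. (cmod (proj_tail M x k))\<^sup>2)" for M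
    by (rule summable_comparison_test'[OF summable, of 0]) (auto simp: proj_tail_def)
  then show "proj_tail M x \<in> l2" by (simp add: l2_def)
  have "(\<Sum>k. (cmod (proj_tail M x k))\<^sup>2) = (\<Sum>k. ?g (k + M))" for M
    using suminf_split_initial_segment[OF tail_summable, where k=M]
    by (simp add: proj_tail_def)
  moreover have "(l2norm (proj_tail M x))\<^sup>2 = (\<Sum>k. (cmod (proj_tail M x k))\<^sup>2)" for M
    by (simp add: l2norm_def suminf_nonneg tail_summable)
  ultimately have tail_sum: "(l2norm (proj_tail M x))\<^sup>2 = (\<Sum>k. ?g (k + M))" for M
    by simp
  have "(\<lambda>M. (\<Sum>k. ?g (k + M))) \<longlonglongrightarrow> 0"
    by (rule suminf_exist_split2[OF summable])
  then have "(\<lambda>M. (l2norm (proj_tail M x))\<^sup>2) \<longlonglongrightarrow> 0"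
    by (simp only: tail_sum)
  then have "(\<lambda>M. sqrt ((l2norm (proj_tail M x))\<^sup>2)) \<longlonglongrightarrow> sqrt 0"
    by (rule tendsto_real_sqrt)
  then show "(\<lambda>M. l2norm (proj_tail M x)) \<longlonglongrightarrow> 0"
    by (simp only: real_sqrt_abs tendsto_rabs_zero_iff real_sqrt_zero)
qed

lemma l2norm_bound_from_finitely_supported:
  assumes S_l2: "\<And>x. x \<in> l2 \<Longrightarrow> S x \<in> l2"
    and S_diff: "\<And>x y. x \<in> l2 \<Longrightarrow> y \<in> l2 \<Longrightarrow> S (\<lambda>k. x k - y k) = (\<lambda>k. S x k - S y k)"
    and S_bounded: "\<And>x. x \<in> l2 \<Longrightarrow> l2norm (S x) \<le> C * l2norm x"
    and S_supported: "\<And>x L. (\<And>k. L \<le> k \<Longrightarrow> x k = 0) \<Longrightarrow> l2norm (S x) \<le> c * l2norm x"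
    and c: "0 \<le> c" and x: "x \<in> l2"
  shows "l2norm (S x) \<le> c * l2norm x"
proof (rule LIMSEQ_le_const)
  show "(\<lambda>M. c * l2norm x + C * l2norm (proj_tail M x)) \<longlonglongrightarrow> c * l2norm x"
    using tendsto_add[OF tendsto_const tendsto_mult[OF tendsto_const proj_tail_l2(2)[OF x]]]
    by simp
  show "\<exists>N. \<forall>M\<ge>N. l2norm (S x) \<le> c * l2norm x + C * l2norm (proj_tail M x)"
  proof (intro exI allI impI)
    fix M
    have tail: "proj_tail M x \<in> l2" by (rule proj_tail_l2(1)[OF x])
    have "S (proj_section M x) = (\<lambda>k. S x k - S (proj_tail M x) k)"
      unfolding proj_section_eq_diff_tail by (rule S_diff[OF x tail])
    then have "S x = (\<lambda>k. S (proj_section M x) k + S (proj_tail M x) k)"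
      by simp
    then have "l2norm (S x) \<le> l2norm (S (proj_section M x)) + l2norm (S (proj_tail M x))"
      using l2_add(2)[OF S_l2[OF proj_section_l2] S_l2[OF tail]] by simp
    also have "\<dots> \<le> c * l2norm (proj_section M x) + C * l2norm (proj_tail M x)"
      by (intro add_mono S_supported[where L=M] S_bounded tail) (simp add: proj_section_def)
    also have "\<dots> \<le> c * l2norm x + C * l2norm (proj_tail M x)"
      using mult_left_mono[OF l2norm_proj_section_le[OF x] c] by simp
    finally show "l2norm (S x) \<le> c * l2norm x + C * l2norm (proj_tail M x)" .
  qed
qed

section \<open>Completeness of \<open>\<ell>\<^sup>2\<close> and contractions\<close>

lemma l2_Cauchy_limit:
  assumes xs: "\<And>j. xs j \<in> l2" and E: "E \<longlonglongrightarrow> 0"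
    and Cauchy: "\<And>j m. j \<le> m \<Longrightarrow> l2norm (\<lambda>k. xs m k - xs j k) \<le> E j"
  shows "\<exists>x\<in>l2. (\<lambda>j. l2norm (\<lambda>k. xs j k - x k)) \<longlonglongrightarrow> 0"
proof -
  have coord: "cmod (xs m k - xs j k) \<le> E j" if "j \<le> m" for j m k
    using norm_le_l2norm[OF l2_diff(1)[OF xs[of m] xs[of j]], of k] Cauchy[OF that] by simp
  have "Cauchy (\<lambda>j. xs j k)" for k
  proof (unfold Cauchy_altdef2, intro allI impI)
    fix e :: real assume "0 < e"
    from order_tendstoD(2)[OF E this] obtain N where N: "E N < e"
      by (auto simp: eventually_sequentially)
    show "\<exists>N. \<forall>n\<ge>N. dist (xs n k) (xs N k) < e"
    proof (intro exI allI impI)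
      fix n assume "N \<le> n"
      then show "dist (xs n k) (xs N k) < e"
        using coord[of N n k] N by (simp add: dist_norm)
    qed
  qed
  define x where "x k = lim (\<lambda>j. xs j k)" for k
  have lim: "(\<lambda>j. xs j k) \<longlonglongrightarrow> x k" for k
    using \<open>Cauchy (\<lambda>j. xs j k)\<close> by (simp add: x_def Cauchy_convergent_iff convergent_LIMSEQ_iff)
  have diff_bound: "section_norm M (\<lambda>k. xs j k - x k) \<le> E j" for j M
  proof -
    have "(\<lambda>m. section_norm M (\<lambda>k. xs j k - xs m k)) \<longlonglongrightarrow> section_norm M (\<lambda>k. xs j k - x k)"
      by (intro section_norm_tendsto tendsto_intros lim)
    moreover have "section_norm M (\<lambda>k. xs j k - xs m k) \<le> E j" if "j \<le> m" for m
      using section_norm_le_l2norm[OF l2_diff(1)[OF xs[of j] xs[of m]], of M] Cauchy[OF that]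
      by (simp add: l2norm_minus_commute[of "xs m"])
    ultimately show ?thesis
      by (intro LIMSEQ_le_const2) auto
  qed
  have diff_l2: "(\<lambda>k. xs j k - x k) \<in> l2" and "l2norm (\<lambda>k. xs j k - x k) \<le> E j" for j
    using l2I_section_norm_bound[of 0, OF diff_bound] by auto
  then have "(\<lambda>j. l2norm (\<lambda>k. xs j k - x k)) \<longlonglongrightarrow> 0"
    by (intro tendsto_sandwich[OF _ _ tendsto_const E] always_eventually allI) auto
  moreover have "x \<in> l2"
    using l2_diff(1)[OF xs diff_l2, of 0 0] by simp
  ultimately show ?thesis by blast
qed

lemma l2_geometric_limit:
  assumes xs: "\<And>j. xs j \<in> l2" and q: "0 \<le> q" "q < 1"
    and step: "\<And>j. l2norm (\<lambda>k. xs (Suc j) k - xs j k) \<le> D * q ^ j"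
  shows "\<exists>x\<in>l2. (\<lambda>j. l2norm (\<lambda>k. xs j k - x k)) \<longlonglongrightarrow> 0"
proof (rule l2_Cauchy_limit[OF xs])
  have D: "0 \<le> D"
    using step[of 0] l2norm_nonneg[OF l2_diff(1)[OF xs xs]] by (metis order_trans power_0 mult_1_right)
  have "(\<lambda>j. D * q ^ j / (1 - q)) \<longlonglongrightarrow> D * 0 / (1 - q)"
    using q by (intro tendsto_intros LIMSEQ_power_zero) auto
  then show "(\<lambda>j. D * q ^ j / (1 - q)) \<longlonglongrightarrow> 0"
    by simp
  show "l2norm (\<lambda>k. xs m k - xs j k) \<le> D * q ^ j / (1 - q)" if jm: "j \<le> m" for j m
  proof -
    obtain i where m: "m = j + i" using jm by (auto simp: le_iff_add)
    have "l2norm (\<lambda>k. xs (j + i) k - xs j k) \<le> (\<Sum>p<i. D * q ^ (j + p))"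
    proof (induction i)
      case (Suc i)
      have "l2norm (\<lambda>k. xs (j + Suc i) k - xs j k)
          \<le> l2norm (\<lambda>k. xs (Suc (j + i)) k - xs (j + i) k) + l2norm (\<lambda>k. xs (j + i) k - xs j k)"
        using l2_add(2)[OF l2_diff(1)[OF xs xs] l2_diff(1)[OF xs xs], of "Suc (j + i)" "j + i" "j + i" j]
        by simp
      then show ?case using step[of "j + i"] Suc by simp
    qed simp
    also have "\<dots> = D * q ^ j * (1 - q ^ i) / (1 - q)"
      using q by (simp add: power_add sum_distrib_left[symmetric] mult.assoc sum_gp_strict)
    also have "\<dots> \<le> D * q ^ j / (1 - q)"
      using q D by (intro divide_right_mono mult_left_le) (auto simp: zero_le_power)
    finally show ?thesis unfolding m .
  qed
qed

lemma l2_contraction_fixpoint: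
  assumes T_l2: "\<And>z. z \<in> l2 \<Longrightarrow> T z \<in> l2"
    and q: "0 \<le> q" "q < 1"
    and contraction: "\<And>a b. a \<in> l2 \<Longrightarrow> b \<in> l2 \<Longrightarrow>
       l2norm (\<lambda>k. T a k - T b k) \<le> q * l2norm (\<lambda>k. a k - b k)"
  shows "\<exists>x\<in>l2. T x = x"
proof -
  define xs where "xs j = (T ^^ j) (\<lambda>k. 0)" for j
  have xs_0: "xs 0 = (\<lambda>k. 0)" and xs_Suc: "xs (Suc j) = T (xs j)" for j
    by (simp_all add: xs_def)
  have xs: "xs j \<in> l2" for j
  proof (induction j)
    case (Suc j)
    then show ?case unfolding xs_Suc by (rule T_l2)
  qed (simp add: xs_0 zero_in_l2)
  have "l2norm (\<lambda>k. xs (Suc j) k - xs j k) \<le> l2norm (\<lambda>k. xs 1 k - xs 0 k) * q ^ j" for j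
  proof (induction j)
    case (Suc j)
    have "l2norm (\<lambda>k. xs (Suc (Suc j)) k - xs (Suc j) k) \<le> q * l2norm (\<lambda>k. xs (Suc j) k - xs j k)"
      using contraction[OF xs[of "Suc j"] xs[of j]] by (simp only: xs_Suc)
    also have "\<dots> \<le> q * (l2norm (\<lambda>k. xs 1 k - xs 0 k) * q ^ j)" by (intro mult_left_mono Suc q)
    finally show ?case by (simp add: algebra_simps)
  qed simp
  then obtain x where x: "x \<in> l2" and lim: "(\<lambda>j. l2norm (\<lambda>k. xs j k - x k)) \<longlonglongrightarrow> 0"
    using l2_geometric_limit[of xs q "l2norm (\<lambda>k. xs 1 k - xs 0 k)"] xs q by blast
  have "l2norm (\<lambda>k. T x k - x k) \<le> q * l2norm (\<lambda>k. xs j k - x k) + l2norm (\<lambda>k. xs (Suc j) k - x k)" for j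
  proof -
    have "l2norm (\<lambda>k. T x k - x k) = l2norm (\<lambda>k. (T x k - T (xs j) k) + (xs (Suc j) k - x k))"
      by (simp add: xs_Suc)
    also have "\<dots> \<le> l2norm (\<lambda>k. T x k - T (xs j) k) + l2norm (\<lambda>k. xs (Suc j) k - x k)"
      by (intro l2_add(2) l2_diff(1) T_l2 x xs)
    also have "l2norm (\<lambda>k. T x k - T (xs j) k) \<le> q * l2norm (\<lambda>k. xs j k - x k)"
      using contraction[OF x xs] by (simp add: l2norm_minus_commute[of x])
    finally show ?thesis by simp
  qed
  moreover have "(\<lambda>j. q * l2norm (\<lambda>k. xs j k - x k) + l2norm (\<lambda>k. xs (Suc j) k - x k)) \<longlonglongrightarrow> q * 0 + 0"
    by (intro tendsto_intros lim LIMSEQ_Suc[OF lim])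
  ultimately have "l2norm (\<lambda>k. T x k - x k) \<le> 0"
    by (intro LIMSEQ_le_const) auto
  then have "T x = x"
    using l2norm_le_0_imp_zero[OF l2_diff(1)[OF T_l2[OF x] x]] by fastforce
  with x show ?thesis by blast
qed

section \<open>Quadratic forms of leading principal submatrices\<close>

definition section_mult :: "nat \<Rightarrow> (nat \<Rightarrow> nat \<Rightarrow> complex) \<Rightarrow> (nat \<Rightarrow> complex) \<Rightarrow> nat \<Rightarrow> complex" where
  "section_mult M A v k = (\<Sum>l<M. A k l * v l)"

definition section_form ::
  "nat \<Rightarrow> (nat \<Rightarrow> nat \<Rightarrow> complex) \<Rightarrow> (nat \<Rightarrow> complex) \<Rightarrow> (nat \<Rightarrow> complex) \<Rightarrow> complex" where
  "section_form M A u v = (\<Sum>k<M. \<Sum>l<M. cnj (u k) * A k l * v l)"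

lemma section_form_eq_sum_mult: "section_form M A u v = (\<Sum>k<M. cnj (u k) * section_mult M A v k)"
  by (simp add: section_form_def section_mult_def sum_distrib_left mult.assoc)

lemma sum_cnj_mult_self: "(\<Sum>k<M. cnj (u k) * u k) = complex_of_real ((section_norm M u)\<^sup>2)"
proof -
  have "cnj z * z = complex_of_real ((cmod z)\<^sup>2)" for z
    using complex_norm_square[of z] by (simp add: mult.commute)
  then show ?thesis
    unfolding section_norm_sq of_real_sum by simp
qed

lemma section_form_polarization:
  "4 * section_form M A u w = section_form M A (\<lambda>k. u k + w k) (\<lambda>k. u k + w k)
     - section_form M A (\<lambda>k. u k - w k) (\<lambda>k. u k - w k)
     - \<i> * section_form M A (\<lambda>k. u k + \<i> * w k) (\<lambda>k. u k + \<i> * w k)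
     + \<i> * section_form M A (\<lambda>k. u k - \<i> * w k) (\<lambda>k. u k - \<i> * w k)"
  unfolding section_form_def sum_distrib_left sum_subtractf[symmetric] sum.distrib[symmetric]
  by (intro sum.cong refl) (simp add: algebra_simps)

lemma section_norm_parallelogram:
  "(section_norm M (\<lambda>k. u k + w k))\<^sup>2 + (section_norm M (\<lambda>k. u k - w k))\<^sup>2
   + (section_norm M (\<lambda>k. u k + \<i> * w k))\<^sup>2 + (section_norm M (\<lambda>k. u k - \<i> * w k))\<^sup>2
   = 4 * (section_norm M u)\<^sup>2 + 4 * (section_norm M w)\<^sup>2"
  unfolding section_norm_sq sum.distrib[symmetric] sum_distrib_left
  by (intro sum.cong refl) (simp only: cmod_power2, simp add: power2_eq_square algebra_simps)

lemma form_bound_if_field_of_values_bound: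
  assumes fov: "field_of_values M A \<subseteq> {z. cmod z \<le> r}"
  shows "cmod (section_form M A v v) \<le> r * (section_norm M v)\<^sup>2"
proof (cases "section_norm M v = 0")
  case True
  then have "v k = 0" if "k < M" for k
    using section_norm_le_0_imp_zero[of M v] True that by simp
  then show ?thesis
    using True by (simp add: section_form_def)
next
  case False
  define s where "s = section_norm M v"
  have s: "0 < s" using False by (simp add: s_def order_less_le)
  define w where "w k = complex_of_real (1 / s) * v k" for k
  have "section_norm M w = 1"
    using s unfolding w_def[abs_def] section_norm_scale by (simp add: s_def norm_divide)
  then have "section_form M A w w \<in> field_of_values M A"
    unfolding field_of_values_def section_form_def by (auto simp: section_norm_sq[symmetric])
  then have "cmod (section_form M A w w) \<le> r" using fov by auto
  moreover have "section_form M A w w = complex_of_real ((1 / s)\<^sup>2) * section_form M A v v"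
    unfolding section_form_def w_def by (simp add: sum_distrib_left algebra_simps power2_eq_square)
  then have "cmod (section_form M A w w) = cmod (section_form M A v v) / s\<^sup>2"
    using s by (simp add: norm_mult norm_divide norm_power power_divide)
  ultimately show ?thesis
    using s by (simp add: s_def pos_divide_le_eq)
qed

locale section_fov_bounded =
  fixes A :: "nat \<Rightarrow> nat \<Rightarrow> complex" and M0 :: nat and r :: real
  assumes r_nonneg: "0 \<le> r" and r_less_1: "r < 1"
    and form_bound: "\<And>M v. M0 < M \<Longrightarrow> cmod (section_form M A v v) \<le> r * (section_norm M v)\<^sup>2"
begin

text \<open>\<open>relax\<close> minimises \<open>1 - 2 t (1 - r) + t\<^sup>2 c\<^sup>2\<close>, the bound on
  \<open>\<parallel>v - t (I - A) v\<parallel>\<^sup>2 / \<parallel>v\<parallel>\<^sup>2\<close> given by coercivity and \<open>\<parallel>I - A\<parallel> \<le> c = 1 + mult_bound\<close>;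
  the minimum value is \<open>contraction\<^sup>2\<close>.\<close>

definition mult_bound :: real where
  "mult_bound = sqrt (r / (1 - r))"

definition relax :: real where
  "relax = (1 - r) / (1 + mult_bound)\<^sup>2"

definition contraction :: real where
  "contraction = sqrt (1 - (1 - r)\<^sup>2 / (1 + mult_bound)\<^sup>2)"

definition stability :: real where
  "stability = relax / (1 - contraction)"

lemma mult_bound_nonneg: "0 \<le> mult_bound"
  using r_nonneg r_less_1 by (simp add: mult_bound_def)

lemma relax_pos: "0 < relax"
  using mult_bound_nonneg r_less_1 by (simp add: relax_def add_nonneg_pos)

lemma contraction_bounds: "0 \<le> contraction" "contraction < 1"
  and contraction_sq: "contraction\<^sup>2 = 1 - (1 - r)\<^sup>2 / (1 + mult_bound)\<^sup>2"
proof -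
  have "(1 - r)\<^sup>2 \<le> (1 + mult_bound)\<^sup>2"
    using mult_bound_nonneg r_nonneg r_less_1 by (intro power_mono) auto
  moreover have "0 < (1 - r)\<^sup>2 / (1 + mult_bound)\<^sup>2"
    using mult_bound_nonneg r_less_1 by (simp add: add_nonneg_pos)
  ultimately have "0 < (1 - r)\<^sup>2 / (1 + mult_bound)\<^sup>2" "(1 - r)\<^sup>2 / (1 + mult_bound)\<^sup>2 \<le> 1"
    using mult_bound_nonneg by (auto simp: divide_le_eq_1)
  then show "0 \<le> contraction" "contraction < 1"
    and "contraction\<^sup>2 = 1 - (1 - r)\<^sup>2 / (1 + mult_bound)\<^sup>2"
    by (simp_all add: contraction_def)
qed

lemma contraction_sq_eq: "1 - 2 * relax * (1 - r) + relax\<^sup>2 * (1 + mult_bound)\<^sup>2 = contraction\<^sup>2"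
proof -
  have identity: "1 - 2 * (a / C) * a + (a / C)\<^sup>2 * C = 1 - a\<^sup>2 / C" if "0 < C" for a C :: real
    using that by (simp add: field_simps power2_eq_square)
  show ?thesis
    unfolding contraction_sq relax_def
    by (rule identity) (use mult_bound_nonneg in \<open>simp add: add_nonneg_pos\<close>)
qed

lemma stability_pos: "0 < stability"
  using relax_pos contraction_bounds by (simp add: stability_def)

lemma section_form_bound:
  assumes "M0 < M"
  shows "cmod (section_form M A u w) \<le> r * ((section_norm M u)\<^sup>2 + (section_norm M w)\<^sup>2)"
proof -
  let ?q = "\<lambda>v. section_form M A v v"
  have triangle4: "cmod (a - b - \<i> * c + \<i> * d) \<le> cmod a + cmod b + cmod c + cmod d"
    for a b c d :: complex
    using norm_triangle_ineq4[of a b] norm_triangle_ineq4[of "a - b" "\<i> * c"]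
      norm_triangle_ineq[of "a - b - \<i> * c" "\<i> * d"]
    by (simp add: norm_mult)
  have "4 * cmod (section_form M A u w) = cmod (4 * section_form M A u w)"
    by (simp add: norm_mult)
  also have "\<dots> \<le> cmod (?q (\<lambda>k. u k + w k)) + cmod (?q (\<lambda>k. u k - w k))
        + cmod (?q (\<lambda>k. u k + \<i> * w k)) + cmod (?q (\<lambda>k. u k - \<i> * w k))"
    unfolding section_form_polarization by (rule triangle4)
  also have "\<dots> \<le> r * (section_norm M (\<lambda>k. u k + w k))\<^sup>2 + r * (section_norm M (\<lambda>k. u k - w k))\<^sup>2
      + r * (section_norm M (\<lambda>k. u k + \<i> * w k))\<^sup>2 + r * (section_norm M (\<lambda>k. u k - \<i> * w k))\<^sup>2"
    using form_bound[OF assms] by (intro add_mono)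
  also have "\<dots> = 4 * (r * ((section_norm M u)\<^sup>2 + (section_norm M w)\<^sup>2))"
    using section_norm_parallelogram[of M u w] by algebra
  finally show ?thesis by simp
qed

lemma section_mult_bound:
  assumes "M0 < M"
  shows "section_norm M (section_mult M A u) \<le> mult_bound * section_norm M u"
proof -
  define w where "w = section_mult M A u"
  have "section_form M A w u = complex_of_real ((section_norm M w)\<^sup>2)"
    unfolding section_form_eq_sum_mult w_def by (rule sum_cnj_mult_self)
  then have "(section_norm M w)\<^sup>2 \<le> r * ((section_norm M w)\<^sup>2 + (section_norm M u)\<^sup>2)"
    using section_form_bound[OF assms, of w u] by (simp add: norm_power)
  then have "(section_norm M w)\<^sup>2 \<le> r / (1 - r) * (section_norm M u)\<^sup>2"
    using r_less_1 by (simp add: field_simps)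
  also have "\<dots> = (mult_bound * section_norm M u)\<^sup>2"
    using r_nonneg r_less_1 by (simp add: mult_bound_def power_mult_distrib)
  finally show ?thesis
    unfolding w_def by (rule power2_le_imp_le) (simp add: mult_bound_nonneg)
qed

lemma section_id_minus_bound:
  assumes "M0 < M"
  shows "section_norm M (\<lambda>k. u k - section_mult M A u k) \<le> (1 + mult_bound) * section_norm M u"
  using section_norm_diff_le[of M u "section_mult M A u"] section_mult_bound[OF assms, of u]
  by (simp add: algebra_simps)

lemma section_coercive:
  assumes "M0 < M"
  shows "(1 - r) * (section_norm M u)\<^sup>2 \<le> Re (\<Sum>k<M. cnj (u k) * (u k - section_mult M A u k))"
proof -
  have "(\<Sum>k<M. cnj (u k) * (u k - section_mult M A u k))
      = complex_of_real ((section_norm M u)\<^sup>2) - section_form M A u u"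
    unfolding section_form_eq_sum_mult sum_cnj_mult_self[symmetric]
    by (simp add: right_diff_distrib sum_subtractf)
  then have "Re (\<Sum>k<M. cnj (u k) * (u k - section_mult M A u k))
      = (section_norm M u)\<^sup>2 - Re (section_form M A u u)"
    by (simp only: minus_complex.sel(1) Re_complex_of_real)
  moreover have "Re (section_form M A u u) \<le> r * (section_norm M u)\<^sup>2"
    using complex_Re_le_cmod form_bound[OF assms] order_trans by blast
  ultimately show ?thesis by (simp add: left_diff_distrib)
qed

lemma section_relaxation_contracts:
  assumes "M0 < M"
  shows "section_norm M (\<lambda>k. u k - relax * (u k - section_mult M A u k)) \<le> contraction * section_norm M u"
proof -
  define w where "w k = u k - section_mult M A u k" for k
  have "(section_norm M (\<lambda>k. u k - relax * w k))\<^sup>2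
      = (section_norm M u)\<^sup>2 - 2 * relax * Re (\<Sum>k<M. cnj (u k) * w k) + relax\<^sup>2 * (section_norm M w)\<^sup>2"
    unfolding section_norm_sq Re_sum sum_distrib_left sum_subtractf[symmetric] sum.distrib[symmetric]
    by (intro sum.cong refl) (simp only: cmod_power2, simp add: power2_eq_square algebra_simps)
  also have "\<dots> \<le> (section_norm M u)\<^sup>2 - 2 * relax * ((1 - r) * (section_norm M u)\<^sup>2)
      + relax\<^sup>2 * ((1 + mult_bound) * section_norm M u)\<^sup>2"
  proof -
    have "(1 - r) * (section_norm M u)\<^sup>2 \<le> Re (\<Sum>k<M. cnj (u k) * w k)"
      unfolding w_def by (rule section_coercive[OF assms])
    then have "relax * ((1 - r) * (section_norm M u)\<^sup>2) \<le> relax * Re (\<Sum>k<M. cnj (u k) * w k)"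
      using relax_pos by simp
    moreover have "section_norm M w \<le> (1 + mult_bound) * section_norm M u"
      unfolding w_def[abs_def] by (rule section_id_minus_bound[OF assms])
    then have "(section_norm M w)\<^sup>2 \<le> ((1 + mult_bound) * section_norm M u)\<^sup>2"
      by (simp add: power_mono)
    then have "relax\<^sup>2 * (section_norm M w)\<^sup>2 \<le> relax\<^sup>2 * ((1 + mult_bound) * section_norm M u)\<^sup>2"
      by (simp add: mult_left_mono)
    ultimately show ?thesis by linarith
  qed
  also have "\<dots> = (1 - 2 * relax * (1 - r) + relax\<^sup>2 * (1 + mult_bound)\<^sup>2) * (section_norm M u)\<^sup>2"
    by (simp add: power2_eq_square algebra_simps)
  also have "1 - 2 * relax * (1 - r) + relax\<^sup>2 * (1 + mult_bound)\<^sup>2 = contraction\<^sup>2"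
    by (rule contraction_sq_eq)
  also have "contraction\<^sup>2 * (section_norm M u)\<^sup>2 = (contraction * section_norm M u)\<^sup>2"
    by (simp add: power_mult_distrib)
  finally have "(section_norm M (\<lambda>k. u k - relax * w k))\<^sup>2 \<le> (contraction * section_norm M u)\<^sup>2" .
  then have "section_norm M (\<lambda>k. u k - relax * w k) \<le> contraction * section_norm M u"
    by (rule power2_le_imp_le) (simp add: contraction_bounds)
  then show ?thesis
    by (simp add: w_def)
qed

lemma section_stability:
  assumes "M0 < M"
  shows "section_norm M u \<le> stability * section_norm M (\<lambda>k. u k - section_mult M A u k)"
proof -
  define w where "w k = u k - section_mult M A u k" for k
  have "section_norm M u \<le> section_norm M (\<lambda>k. u k - relax * w k) + section_norm M (\<lambda>k. relax * w k)"
    using section_norm_add_le[of M "\<lambda>k. u k - relax * w k" "\<lambda>k. relax * w k"] by simp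
  moreover have "section_norm M (\<lambda>k. u k - relax * w k) \<le> contraction * section_norm M u"
    unfolding w_def by (rule section_relaxation_contracts[OF assms])
  moreover have "section_norm M (\<lambda>k. relax * w k) = relax * section_norm M w"
    unfolding section_norm_scale using relax_pos by simp
  ultimately have "(1 - contraction) * section_norm M u \<le> relax * section_norm M w"
    unfolding left_diff_distrib mult_1_left by linarith
  moreover have "0 < 1 - contraction"
    using contraction_bounds by simp
  ultimately have "section_norm M u \<le> relax * section_norm M w / (1 - contraction)"
    by (simp add: pos_le_divide_eq mult.commute)
  then show ?thesis
    unfolding stability_def w_def[abs_def] by simp
qed

end

lemma section_fov_bounded_if_field_of_values_bound:
  assumes "r < 1" and fov: "\<forall>M>M0. field_of_values M A \<subseteq> {z. cmod z \<le> r}"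
  shows "section_fov_bounded A M0 r"
proof
  have form_bound: "cmod (section_form M A v v) \<le> r * (section_norm M v)\<^sup>2" if "M0 < M" for M v
    using fov that form_bound_if_field_of_values_bound by blast
  then show "cmod (section_form M A v v) \<le> r * (section_norm M v)\<^sup>2" if "M0 < M" for M v
    using that .
  have "cmod (section_form (Suc M0) A (\<lambda>k. 1) (\<lambda>k. 1)) \<le> r * (section_norm (Suc M0) (\<lambda>k. 1))\<^sup>2"
    by (rule form_bound) simp
  also have "(section_norm (Suc M0) (\<lambda>k. 1))\<^sup>2 = real (Suc M0)"
    by (simp add: section_norm_sq)
  finally have "0 \<le> r * real (Suc M0)"
    by (rule order_trans[OF norm_ge_zero])
  then show "0 \<le> r"
    by (simp add: zero_le_mult_iff)
qed fact

section \<open>The infinite matrix on \<open>\<ell>\<^sup>2\<close>\<close>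

context section_fov_bounded
begin

lemma row_section_norm_bound: "section_norm L (\<lambda>l. A k l) \<le> mult_bound"
proof -
  define M where "M = max (Suc k) (max L (Suc M0))"
  have M: "M0 < M" "k < M" "L \<le> M" by (auto simp: M_def)
  define u where "u l = (if l < L then cnj (A k l) else 0)" for l
  define \<rho> where "\<rho> = section_norm L (\<lambda>l. A k l)"
  have "section_mult M A u k = (\<Sum>l<L. A k l * cnj (A k l))"
    unfolding section_mult_def using M by (intro sum.mono_neutral_cong_right) (auto simp: u_def)
  also have "\<dots> = complex_of_real (\<rho>\<^sup>2)"
    unfolding \<rho>_def section_norm_sq of_real_sum by (simp add: complex_norm_square[symmetric])
  finally have "\<rho>\<^sup>2 = cmod (section_mult M A u k)"
    by (simp add: norm_power)
  also have "\<dots> \<le> section_norm M (section_mult M A u)"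
    using M by (intro norm_le_section_norm) auto
  also have "\<dots> \<le> mult_bound * section_norm M u"
    by (rule section_mult_bound[OF M(1)])
  also have "section_norm M u = section_norm L u"
    using M by (intro section_norm_supported) (auto simp: u_def)
  also have "\<dots> = \<rho>"
    unfolding \<rho>_def section_norm_def by (rule L2_set_cong) (auto simp: u_def)
  finally have "\<rho> * \<rho> \<le> mult_bound * \<rho>"
    by (simp add: power2_eq_square)
  moreover have "0 \<le> \<rho>"
    by (simp add: \<rho>_def)
  ultimately have "\<rho> \<le> mult_bound"
    using mult_bound_nonneg mult_right_le_imp_le[of \<rho> \<rho> mult_bound] by (cases "\<rho> = 0") auto
  then show ?thesis
    by (simp add: \<rho>_def)
qed

lemma row_l2: "(\<lambda>l. A k l) \<in> l2"
  using l2I_section_norm_bound(1)[of 0] row_section_norm_bound by blast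

lemma matrix_row_summable:
  assumes "x \<in> l2"
  shows "summable (\<lambda>l. A k l * x l)"
proof (rule summable_comparison_test'[of "\<lambda>l. ((cmod (A k l))\<^sup>2 + (cmod (x l))\<^sup>2) / 2" 0])
  show "summable (\<lambda>l. ((cmod (A k l))\<^sup>2 + (cmod (x l))\<^sup>2) / 2)"
    using row_l2 assms by (intro summable_divide summable_add) (auto simp: l2_def)
  show "cmod (A k l * x l) \<le> ((cmod (A k l))\<^sup>2 + (cmod (x l))\<^sup>2) / 2" for l
    using sum_squares_bound[of "cmod (A k l)" "cmod (x l)"] by (simp add: norm_mult)
qed

lemma id_minus_mat_supported:
  assumes "\<And>l. L \<le> l \<Longrightarrow> x l = 0"
  shows "id_minus_mat A x = (\<lambda>k. x k - section_mult L A x k)"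
  unfolding id_minus_mat_def section_mult_def
  by (intro ext arg_cong2[where f=minus] refl suminf_finite) (auto simp: assms)

lemma id_minus_mat_diff:
  assumes "x \<in> l2" "y \<in> l2"
  shows "id_minus_mat A (\<lambda>k. x k - y k) = (\<lambda>k. id_minus_mat A x k - id_minus_mat A y k)"
proof
  fix k
  have "(\<Sum>l. A k l * (x l - y l)) = (\<Sum>l. A k l * x l) - (\<Sum>l. A k l * y l)"
    unfolding right_diff_distrib
    by (rule suminf_diff[OF matrix_row_summable[OF assms(1)] matrix_row_summable[OF assms(2)], symmetric])
  then show "id_minus_mat A (\<lambda>k. x k - y k) k = id_minus_mat A x k - id_minus_mat A y k"
    by (simp add: id_minus_mat_def)
qed

lemma matrix_mult_l2:
  assumes x: "x \<in> l2"
  shows "(\<lambda>k. \<Sum>l. A k l * x l) \<in> l2" and "l2norm (\<lambda>k. \<Sum>l. A k l * x l) \<le> mult_bound * l2norm x"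
proof -
  have "section_norm n (\<lambda>k. \<Sum>l. A k l * x l) \<le> mult_bound * l2norm x" for n
  proof (rule LIMSEQ_le_const2)
    show "(\<lambda>L. section_norm n (section_mult L A x)) \<longlonglongrightarrow> section_norm n (\<lambda>k. \<Sum>l. A k l * x l)"
      unfolding section_mult_def
      by (intro section_norm_tendsto summable_LIMSEQ matrix_row_summable x)
    show "\<exists>N. \<forall>L\<ge>N. section_norm n (section_mult L A x) \<le> mult_bound * l2norm x"
    proof (intro exI allI impI)
      fix L
      define M where "M = max n (max L (Suc M0))"
      have M: "M0 < M" "n \<le> M" "L \<le> M" by (auto simp: M_def)
      have "section_mult L A x = section_mult M A (proj_section L x)"
        unfolding section_mult_def using M
        by (intro ext sum.mono_neutral_cong_left) (auto simp: proj_section_def)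
      then have "section_norm n (section_mult L A x) \<le> section_norm M (section_mult M A (proj_section L x))"
        using section_norm_mono[OF M(2)] by simp
      also have "\<dots> \<le> mult_bound * section_norm M (proj_section L x)"
        by (rule section_mult_bound[OF M(1)])
      also have "\<dots> \<le> mult_bound * l2norm x"
        using section_norm_le_l2norm[OF proj_section_l2] l2norm_proj_section_le[OF x]
        by (intro mult_left_mono mult_bound_nonneg) (meson order_trans)
      finally show "section_norm n (section_mult L A x) \<le> mult_bound * l2norm x" .
    qed
  qed
  then show "(\<lambda>k. \<Sum>l. A k l * x l) \<in> l2" and "l2norm (\<lambda>k. \<Sum>l. A k l * x l) \<le> mult_bound * l2norm x"
    using l2I_section_norm_bound[of 0] by blast+
qed

lemma id_minus_mat_l2:
  assumes x: "x \<in> l2"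
  shows "id_minus_mat A x \<in> l2" and "l2norm (id_minus_mat A x) \<le> (1 + mult_bound) * l2norm x"
proof -
  have eq: "id_minus_mat A x = (\<lambda>k. x k - (\<Sum>l. A k l * x l))"
    by (simp add: id_minus_mat_def[abs_def])
  show "id_minus_mat A x \<in> l2"
    unfolding eq by (rule l2_diff(1)[OF x matrix_mult_l2(1)[OF x]])
  show "l2norm (id_minus_mat A x) \<le> (1 + mult_bound) * l2norm x"
    using l2_diff(2)[OF x matrix_mult_l2(1)[OF x]] matrix_mult_l2(2)[OF x]
    unfolding eq by (simp add: algebra_simps)
qed

lemma relaxation_contracts_supported:
  assumes supported: "\<And>k. L \<le> k \<Longrightarrow> u k = 0"
  shows "l2norm (\<lambda>k. u k - relax * id_minus_mat A u k) \<le> contraction * l2norm u"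
proof (rule l2I_section_norm_bound(2))
  fix n assume n: "max L (Suc M0) \<le> n"
  have "section_mult L A u = section_mult n A u"
    unfolding section_mult_def using n supported by (intro ext sum.mono_neutral_left) auto
  then have "section_norm n (\<lambda>k. u k - relax * id_minus_mat A u k)
      = section_norm n (\<lambda>k. u k - relax * (u k - section_mult n A u k))"
    by (simp add: id_minus_mat_supported[OF supported])
  also have "\<dots> \<le> contraction * section_norm n u"
    using n by (intro section_relaxation_contracts) auto
  also have "section_norm n u = section_norm L u"
    by (intro section_norm_supported[OF supported] le_trans[OF max.cobounded1 n])
  also have "\<dots> = l2norm u"
    by (rule l2_supported(2)[OF supported, symmetric])
  finally show "section_norm n (\<lambda>k. u k - relax * id_minus_mat A u k) \<le> contraction * l2norm u" .
qed

lemma relaxation_contracts_l2: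
  assumes x: "x \<in> l2"
  shows "l2norm (\<lambda>k. x k - relax * id_minus_mat A x k) \<le> contraction * l2norm x"
proof (rule l2norm_bound_from_finitely_supported[where S="\<lambda>x k. x k - relax * id_minus_mat A x k"])
  show "(\<lambda>k. z k - relax * id_minus_mat A z k) \<in> l2" if "z \<in> l2" for z
    by (intro l2_diff(1) l2_scale(1) id_minus_mat_l2(1) that)
  show "(\<lambda>k. (a k - b k) - relax * id_minus_mat A (\<lambda>k. a k - b k) k)
      = (\<lambda>k. (a k - relax * id_minus_mat A a k) - (b k - relax * id_minus_mat A b k))"
    if "a \<in> l2" "b \<in> l2" for a b
    by (simp add: id_minus_mat_diff[OF that] algebra_simps)
  show "l2norm (\<lambda>k. z k - relax * id_minus_mat A z k) \<le> (1 + relax * (1 + mult_bound)) * l2norm z"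
    if z: "z \<in> l2" for z
  proof -
    have Bz: "id_minus_mat A z \<in> l2" by (rule id_minus_mat_l2(1)[OF z])
    have "l2norm (\<lambda>k. z k - relax * id_minus_mat A z k)
        \<le> l2norm z + l2norm (\<lambda>k. relax * id_minus_mat A z k)"
      by (rule l2_diff(2)[OF z l2_scale(1)[OF Bz]])
    also have "\<dots> \<le> l2norm z + relax * ((1 + mult_bound) * l2norm z)"
      using l2_scale(2)[OF Bz, of relax] id_minus_mat_l2(2)[OF z] relax_pos
      by (simp add: order_trans[OF _ mult_left_mono])
    finally show ?thesis
      by (simp add: algebra_simps)
  qed
qed (use relaxation_contracts_supported contraction_bounds x in auto)

lemma stability_l2:
  assumes x: "x \<in> l2"
  shows "l2norm x \<le> stability * l2norm (id_minus_mat A x)"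
proof -
  have Bx: "id_minus_mat A x \<in> l2" by (rule id_minus_mat_l2(1)[OF x])
  have "l2norm x \<le> l2norm (\<lambda>k. x k - relax * id_minus_mat A x k) + l2norm (\<lambda>k. relax * id_minus_mat A x k)"
    using l2_add(2)[OF l2_diff(1)[OF x l2_scale(1)[OF Bx, of relax]] l2_scale(1)[OF Bx, of relax]]
    by simp
  also have "\<dots> \<le> contraction * l2norm x + relax * l2norm (id_minus_mat A x)"
    using relaxation_contracts_l2[OF x] l2_scale(2)[OF Bx, of relax] relax_pos by simp
  finally have "(1 - contraction) * l2norm x \<le> relax * l2norm (id_minus_mat A x)"
    unfolding left_diff_distrib mult_1_left by linarith
  moreover have "0 < 1 - contraction"
    using contraction_bounds by simp
  ultimately show ?thesis
    by (simp add: stability_def pos_le_divide_eq mult.commute)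
qed

lemma inj_on_id_minus_mat: "inj_on (id_minus_mat A) l2"
proof (rule inj_onI, rule ext)
  fix x y k assume x: "x \<in> l2" and y: "y \<in> l2" and eq: "id_minus_mat A x = id_minus_mat A y"
  have "l2norm (\<lambda>k. x k - y k) \<le> stability * l2norm (id_minus_mat A (\<lambda>k. x k - y k))"
    by (rule stability_l2[OF l2_diff(1)[OF x y]])
  also have "id_minus_mat A (\<lambda>k. x k - y k) = (\<lambda>k. 0)"
    using id_minus_mat_diff[OF x y] eq by simp
  finally show "x k = y k"
    using l2norm_le_0_imp_zero[OF l2_diff(1)[OF x y], of k] by simp
qed

lemma id_minus_mat_surj:
  assumes y: "y \<in> l2"
  shows "\<exists>x\<in>l2. id_minus_mat A x = y"
proof -
  define T where "T = (\<lambda>z k. z k - relax * (id_minus_mat A z k - y k))"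
  have T_l2: "T z \<in> l2" if z: "z \<in> l2" for z
  proof -
    have "T z = (\<lambda>k. (z k - relax * id_minus_mat A z k) + relax * y k)"
      by (simp add: T_def algebra_simps fun_eq_iff)
    then show ?thesis
      by (simp add: l2_add(1) l2_diff(1) l2_scale(1) id_minus_mat_l2(1) y z)
  qed
  have "l2norm (\<lambda>k. T a k - T b k) \<le> contraction * l2norm (\<lambda>k. a k - b k)"
    if ab: "a \<in> l2" "b \<in> l2" for a b
  proof -
    have "(\<lambda>k. T a k - T b k)
        = (\<lambda>k. (a k - b k) - relax * id_minus_mat A (\<lambda>k. a k - b k) k)"
      unfolding id_minus_mat_diff[OF ab] by (simp add: T_def fun_eq_iff algebra_simps)
    then show ?thesis
      using relaxation_contracts_l2[OF l2_diff(1)[OF ab]] by simp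
  qed
  then obtain x where x: "x \<in> l2" and "T x = x"
    using l2_contraction_fixpoint[of T contraction] T_l2 contraction_bounds by blast
  then have fixpoint: "(\<lambda>k. x k - relax * (id_minus_mat A x k - y k)) = x"
    unfolding T_def by simp
  have "id_minus_mat A x k = y k" for k
    using fun_cong[OF fixpoint, of k] relax_pos by simp
  then have "id_minus_mat A x = y" ..
  with x show ?thesis by blast
qed

lemma bij_betw_id_minus_mat: "bij_betw (id_minus_mat A) l2 l2"
  unfolding bij_betw_def
  using inj_on_id_minus_mat id_minus_mat_l2(1) id_minus_mat_surj by blast

lemma inv_id_minus_mat_bound:
  assumes y: "y \<in> l2"
  shows "l2norm (inv_into l2 (id_minus_mat A) y) \<le> stability * l2norm y"
proof -
  obtain x where x: "x \<in> l2" "id_minus_mat A x = y"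
    using id_minus_mat_surj[OF y] by blast
  then have "inv_into l2 (id_minus_mat A) y = x"
    using inv_into_f_f[OF inj_on_id_minus_mat] by blast
  with stability_l2[OF x(1)] x(2) show ?thesis by simp
qed

end

section \<open>Finite sections\<close>

context section_fov_bounded
begin

lemma section_fov_bounded_truncation:
  assumes M: "M0 < M"
  shows "section_fov_bounded (\<lambda>k l. if k < M \<and> l < M then A k l else 0) M r"
proof
  fix M' v assume "M < M'"
  have "section_form M' (\<lambda>k l. if k < M \<and> l < M then A k l else 0) v v = section_form M A v v"
    unfolding section_form_def using \<open>M < M'\<close>
    by (intro sum.mono_neutral_cong_right) (auto intro!: sum.mono_neutral_cong_right)
  also have "cmod (section_form M A v v) \<le> r * (section_norm M v)\<^sup>2"
    by (rule form_bound[OF M])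
  also have "\<dots> \<le> r * (section_norm M' v)\<^sup>2"
    using \<open>M < M'\<close> r_nonneg by (intro mult_left_mono power_mono section_norm_mono) auto
  finally show "cmod (section_form M' (\<lambda>k l. if k < M \<and> l < M then A k l else 0) v v)
      \<le> r * (section_norm M' v)\<^sup>2" .
qed (use r_nonneg r_less_1 in auto)

text \<open>The \<open>M \<times> M\<close> system is the infinite system for the matrix cut down to its leading
  block, which again satisfies the hypotheses, so surjectivity on \<open>\<ell>\<^sup>2\<close> solves it.\<close>

lemma finite_section_solution_exists:
  assumes M: "M0 < M"
  shows "\<exists>v. (\<forall>k\<ge>M. v k = 0) \<and> (\<forall>k<M. v k - (\<Sum>l<M. A k l * v l) = y k)"
proof -
  define A' where "A' = (\<lambda>k l. if k < M \<and> l < M then A k l else 0)"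
  interpret truncated: section_fov_bounded A' M r
    unfolding A'_def by (rule section_fov_bounded_truncation[OF M])
  obtain v where v: "id_minus_mat A' v = proj_section M y"
    using truncated.id_minus_mat_surj[OF proj_section_l2] by blast
  have row: "(\<Sum>l. A' k l * v l) = (if k < M then \<Sum>l<M. A k l * v l else 0)" for k
  proof -
    have "(\<Sum>l. A' k l * v l) = (\<Sum>l<M. A' k l * v l)"
      by (rule suminf_finite) (auto simp: A'_def)
    then show ?thesis
      by (simp add: A'_def)
  qed
  have solves: "v k - (if k < M then \<Sum>l<M. A k l * v l else 0) = proj_section M y k" for k
    using fun_cong[OF v, of k] unfolding id_minus_mat_def row .
  show ?thesis
  proof (intro exI conjI allI impI)
    show "v k = 0" if "M \<le> k" for k
      using solves[of k] that by (simp add: proj_section_def)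
    show "v k - (\<Sum>l<M. A k l * v l) = y k" if "k < M" for k
      using solves[of k] that by (simp add: proj_section_def)
  qed
qed

lemma finite_section_solution_unique:
  assumes M: "M0 < M"
    and v: "\<forall>k\<ge>M. v k = 0" "\<forall>k<M. v k - (\<Sum>l<M. A k l * v l) = y k"
    and w: "\<forall>k\<ge>M. w k = 0" "\<forall>k<M. w k - (\<Sum>l<M. A k l * w l) = y k"
  shows "v = w"
proof
  fix k
  define d where "d k = v k - w k" for k
  have "section_norm M d \<le> stability * section_norm M (\<lambda>k. d k - section_mult M A d k)"
    by (rule section_stability[OF M])
  also have "section_norm M (\<lambda>k. d k - section_mult M A d k) = section_norm M (\<lambda>k. 0)"
  proof (rule section_norm_cong)
    fix k assume "k < M"
    with v(2) w(2) have "v k = y k + (\<Sum>l<M. A k l * v l)" "w k = y k + (\<Sum>l<M. A k l * w l)"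
      by (simp_all add: algebra_simps)
    then show "d k - section_mult M A d k = 0"
      by (simp add: d_def section_mult_def right_diff_distrib sum_subtractf)
  qed
  finally have "section_norm M d \<le> 0"
    by simp
  then show "v k = w k"
    using section_norm_le_0_imp_zero[of M d k] v(1) w(1) by (cases "k < M") (auto simp: d_def)
qed

lemma finite_section_error_bound:
  assumes M: "M0 < M" and x: "x \<in> l2"
    and v: "\<forall>k\<ge>M. v k = 0" "\<forall>k<M. v k - (\<Sum>l<M. A k l * v l) = id_minus_mat A x k"
  shows "l2norm (\<lambda>k. v k - x k) \<le> (stability * (1 + mult_bound) + 1) * l2norm (proj_tail M x)"
proof -
  define e where "e k = v k - proj_section M x k" for k
  have e_supported: "\<And>k. M \<le> k \<Longrightarrow> e k = 0"
    using v(1) by (simp add: e_def proj_section_def)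
  have tail: "proj_tail M x \<in> l2" by (rule proj_tail_l2(1)[OF x])
  have B_section: "id_minus_mat A (proj_section M x) k = proj_section M x k - section_mult M A (proj_section M x) k" for k
    by (simp add: id_minus_mat_supported[of M] proj_section_def)
  have B_tail: "id_minus_mat A (proj_tail M x) = (\<lambda>k. id_minus_mat A x k - id_minus_mat A (proj_section M x) k)"
  proof -
    have "proj_tail M x = (\<lambda>k. x k - proj_section M x k)"
      by (auto simp: proj_section_def proj_tail_def)
    then show ?thesis
      by (simp only: id_minus_mat_diff[OF x proj_section_l2])
  qed
  have "section_norm M e \<le> stability * section_norm M (\<lambda>k. e k - section_mult M A e k)"
    by (rule section_stability[OF M])
  also have "section_norm M (\<lambda>k. e k - section_mult M A e k) = section_norm M (id_minus_mat A (proj_tail M x))"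
    using v(2) B_section
    by (intro section_norm_cong) (simp add: B_tail e_def section_mult_def right_diff_distrib sum_subtractf)
  also have "\<dots> \<le> (1 + mult_bound) * l2norm (proj_tail M x)"
    using section_norm_le_l2norm[OF id_minus_mat_l2(1)[OF tail]] id_minus_mat_l2(2)[OF tail] by (rule order_trans)
  finally have e_bound: "l2norm e \<le> stability * (1 + mult_bound) * l2norm (proj_tail M x)"
    using stability_pos l2_supported(2)[OF e_supported] by (simp add: mult.assoc mult_left_mono)
  have "(\<lambda>k. v k - x k) = (\<lambda>k. e k - proj_tail M x k)"
    by (auto simp: e_def proj_section_def proj_tail_def)
  then have "l2norm (\<lambda>k. v k - x k) \<le> l2norm e + l2norm (proj_tail M x)"
    using l2_diff(2)[OF l2_supported(1)[OF e_supported] tail] by simp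
  with e_bound show ?thesis
    by (simp add: algebra_simps)
qed

lemma finite_sections_converge:
  assumes x: "x \<in> l2"
    and v: "\<forall>M>M0. (\<forall>k\<ge>M. v M k = 0) \<and> (\<forall>k<M. v M k - (\<Sum>l<M. A k l * v M l) = id_minus_mat A x k)"
  shows "(\<lambda>M. l2norm (\<lambda>k. v M k - x k)) \<longlonglongrightarrow> 0"
proof (rule tendsto_sandwich[OF _ _ tendsto_const])
  let ?K = "stability * (1 + mult_bound) + 1"
  have "(\<lambda>k. v M k - x k) \<in> l2" if "M0 < M" for M
    using v that by (intro l2_diff(1) x l2_supported(1)[of M]) auto
  then show "\<forall>\<^sub>F M in sequentially. 0 \<le> l2norm (\<lambda>k. v M k - x k)"
    by (auto simp: eventually_sequentially intro!: exI[of _ "Suc M0"])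
  show "\<forall>\<^sub>F M in sequentially. l2norm (\<lambda>k. v M k - x k) \<le> ?K * l2norm (proj_tail M x)"
    using finite_section_error_bound[OF _ x] v
    by (auto simp: eventually_sequentially intro!: exI[of _ "Suc M0"])
  show "(\<lambda>M. ?K * l2norm (proj_tail M x)) \<longlonglongrightarrow> 0"
    using tendsto_mult_right_zero[OF proj_tail_l2(2)[OF x]] .
qed

end

theorem theorem4p1:
  fixes f :: "real \<Rightarrow> complex" and N M0 :: nat and r :: real
  assumes analytic: "\<exists>S g. open S \<and> complex_of_real ` {-1..1} \<subseteq> S \<and> g holomorphic_on S \<and>
                        (\<forall>t\<in>{-1..1}. f t = g (complex_of_real t))"
    and r_lt: "r < 1"
    and fov: "\<forall>M>M0. field_of_values M (coeff_matrix f N) \<subseteq> {z. cmod z \<le> r}"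
  shows "(\<exists>C. \<forall>x\<in>l2. l2norm (id_minus_mat (coeff_matrix f N) x) \<le> C * l2norm x)
       \<and> bij_betw (id_minus_mat (coeff_matrix f N)) l2 l2
       \<and> (\<exists>C. \<forall>y\<in>l2. l2norm (inv_into l2 (id_minus_mat (coeff_matrix f N)) y) \<le> C * l2norm y)
       \<and> (\<forall>y\<in>l2. \<forall>x\<in>l2. id_minus_mat (coeff_matrix f N) x = y \<longrightarrow>
            (\<forall>M>M0. \<exists>!v. (\<forall>k\<ge>M. v k = 0) \<and>
                 (\<forall>k<M. v k - (\<Sum>l<M. coeff_matrix f N k l * v l) = y k))
          \<and> (\<forall>xs :: nat \<Rightarrow> nat \<Rightarrow> complex.
               (\<forall>M>M0. (\<forall>k\<ge>M. xs M k = 0) \<and>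
                  (\<forall>k<M. xs M k - (\<Sum>l<M. coeff_matrix f N k l * xs M l) = y k))
               \<longrightarrow> (\<lambda>M. l2norm (\<lambda>k. xs M k - x k)) \<longlonglongrightarrow> 0))"
proof -
  interpret section_fov_bounded "coeff_matrix f N" M0 r
    by (rule section_fov_bounded_if_field_of_values_bound[OF r_lt fov])
  show ?thesis
  proof (intro conjI ballI allI impI)
    show "\<exists>C. \<forall>x\<in>l2. l2norm (id_minus_mat (coeff_matrix f N) x) \<le> C * l2norm x"
      using id_minus_mat_l2(2) by blast
    show "bij_betw (id_minus_mat (coeff_matrix f N)) l2 l2"
      by (rule bij_betw_id_minus_mat)
    show "\<exists>C. \<forall>y\<in>l2. l2norm (inv_into l2 (id_minus_mat (coeff_matrix f N)) y) \<le> C * l2norm y"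
      using inv_id_minus_mat_bound by blast
  next
    fix y M assume "M0 < M"
    then show "\<exists>!v. (\<forall>k\<ge>M. v k = 0) \<and> (\<forall>k<M. v k - (\<Sum>l<M. coeff_matrix f N k l * v l) = y k)"
      using finite_section_solution_exists finite_section_solution_unique by blast
  next
    fix y x xs
    assume "x \<in> l2" and "id_minus_mat (coeff_matrix f N) x = y"
      and "\<forall>M>M0. (\<forall>k\<ge>M. xs M k = 0) \<and>
             (\<forall>k<M. xs M k - (\<Sum>l<M. coeff_matrix f N k l * xs M l) = y k)"
    then show "(\<lambda>M. l2norm (\<lambda>k. xs M k - x k)) \<longlonglongrightarrow> 0"
      using finite_sections_converge by blast
  qed
qed

end
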